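(* Let $v\geq 7$ be an integer with $v\equiv 1$ or $7\pmod{14}$. Then $K^*_v$ has a $D_i$-decomposition for every $i\in[1,7]$.
   Context: $K^*_v$ denotes the complete symmetric digraph of order $v$: it has $v$ vertices and contains both arcs $(x,y)$ and $(y,x)$ for every pair of distinct vertices $x,y$. A $D$-decomposition of a digraph $K$ is a set of subdigraphs of $K$, each isomorphic to $D$, such that every arc of $K$ lies in exactly one of them. For distinct vertices $v_0,\dots,v_6$, the digraphs $D_i[v_0,v_1,\dots,v_6]$ ($i\in[1,7]$) all have vertex set $\{v_0,\dots,v_6\}$ and the following arc sets: $D_1$: $(v_1,v_0),(v_1,v_2),(v_2,v_3),(v_3,v_4),(v_4,v_5),(v_5,v_6),(v_6,v_0)$; $D_2$: $(v_1,v_0),(v_2,v_1),(v_2,v_3),(v_3,v_4),(v_4,v_5),(v_5,v_6),(v_6,v_0)$; $D_3$: $(v_1,v_0),(v_1,v_2),(v_3,v_2),(v_3,v_4),(v_4,v_5),(v_5,v_6),(v_6,v_0)$; $D_4$: $(v_1,v_0),(v_1,v_2),(v_2,v_3),(v_4,v_3),(v_4,v_5),(v_5,v_6),(v_6,v_0)$; $D_5$: $(v_1,v_0),(v_2,v_1),(v_3,v_2),(v_3,v_4),(v_4,v_5),(v_5,v_6),(v_6,v_0)$; $D_6$: $(v_1,v_0),(v_2,v_1),(v_2,v_3),(v_3,v_4),(v_5,v_4),(v_5,v_6),(v_6,v_0)$; $D_7$: $(v_1,v_0),(v_1,v_2),(v_3,v_2),(v_3,v_4),(v_4,v_5),(v_6,v_5),(v_6,v_0)$.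 $D_i$ also denotes the isomorphism type of $D_i[v_0,\dots,v_6]$. *)

theory Defs
  imports Main
begin

text \<open>Arcs of a digraph are ordered pairs. The complete symmetric digraph on vertex set V
  has all arcs (x,y) with x, y in V distinct. K*_v is taken on the vertex set {0..<v}.\<close>

definition complete_sym_arcs :: "'a set \<Rightarrow> ('a \<times> 'a) set" where
  "complete_sym_arcs V = {(x, y). x \<in> V \<and> y \<in> V \<and> x \<noteq> y}"

text \<open>Arc set of D_i[v_0,...,v_6], where the vertex v_j is given as u j.\<close>

fun D_arcs :: "nat \<Rightarrow> (nat \<Rightarrow> 'a) \<Rightarrow> ('a \<times> 'a) set" where
  "D_arcs i u =
    (if i = 1 then {(u 1, u 0), (u 1, u 2), (u 2, u 3), (u 3, u 4), (u 4, u 5), (u 5, u 6), (u 6, u 0)}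
     else if i = 2 then {(u 1, u 0), (u 2, u 1), (u 2, u 3), (u 3, u 4), (u 4, u 5), (u 5, u 6), (u 6, u 0)}
     else if i = 3 then {(u 1, u 0), (u 1, u 2), (u 3, u 2), (u 3, u 4), (u 4, u 5), (u 5, u 6), (u 6, u 0)}
     else if i = 4 then {(u 1, u 0), (u 1, u 2), (u 2, u 3), (u 4, u 3), (u 4, u 5), (u 5, u 6), (u 6, u 0)}
     else if i = 5 then {(u 1, u 0), (u 2, u 1), (u 3, u 2), (u 3, u 4), (u 4, u 5), (u 5, u 6), (u 6, u 0)}
     else if i = 6 then {(u 1, u 0), (u 2, u 1), (u 2, u 3), (u 3, u 4), (u 5, u 4), (u 5, u 6), (u 6, u 0)}
     else {(u 1, u 0), (u 1, u 2), (u 3, u 2), (u 3, u 4), (u 4, u 5), (u 6, u 5), (u 6, u 0)})"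

text \<open>A subdigraph of the complete symmetric digraph on V isomorphic to D_i: it is
  D_i[v_0,...,v_6] for distinct vertices v_0,...,v_6 of V (every vertex of D_i is incident
  with an arc, so the subdigraph is determined by its arc set).\<close>

definition is_D_copy :: "nat \<Rightarrow> 'a set \<Rightarrow> ('a \<times> 'a) set \<Rightarrow> bool" where
  "is_D_copy i V B \<longleftrightarrow>
     (\<exists>u. inj_on u {0..<7} \<and> u ` {0..<7} \<subseteq> V \<and> B = D_arcs i u)"

definition has_D_decomposition :: "nat \<Rightarrow> 'a set \<Rightarrow> bool" where
  "has_D_decomposition i V \<longleftrightarrow>
     (\<exists>\<B>. (\<forall>B\<in>\<B>. is_D_copy i V B) \<and>
          (\<forall>a\<in>complete_sym_arcs V. \<exists>!B. B \<in> \<B> \<and> a \<in> B))"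

end

theory Submission
  imports Defs "HOL-Number_Theory.Cong"
begin

text \<open>Write a vertex of \<open>K*_v\<close>, \<open>v = 7m + h\<close> with \<open>m\<close> odd and \<open>h \<in> {0, 8}\<close>, either as a point
  \<open>(x, a) \<in> \<int>\<^sub>m \<times> \<int>\<^sub>7\<close> or as one of \<open>h\<close> extra points forming a hole. Every \<open>D_i\<close> is an
  orientation of a 7-cycle, and a reflection of the cycle reverses all its arcs, so two copies
  of \<open>D_i\<close> cover both orientations of a 7-cycle. Translates of a single 7-cycle in
  \<open>\<int>\<^sub>m \<times> \<int>\<^sub>7\<close> for each length \<open>d \<le> (m - 1)/2\<close> cover every edge between distinct groups
  \<open>x \<noteq> y\<close> (here \<open>m\<close> odd is used), and the arcs inside a group together with the hole are
  covered by small explicit designs: of \<open>K*_7\<close>, of \<open>K*_15\<close> minus \<open>K*_8\<close>, and of \<open>K*_8\<close>.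
  Counting shows the resulting covering uses exactly as many arcs as \<open>K*_v\<close> has, so every
  arc is covered exactly once.\<close>

lemma in_1_to_7_cases: "i \<in> {1..7::nat} \<Longrightarrow> i = 1 \<or> i = 2 \<or> i = 3 \<or> i = 4 \<or> i = 5 \<or> i = 6 \<or> i = 7"
  by auto

lemma less_7_cases: "t < (7::nat) \<Longrightarrow> t = 0 \<or> t = 1 \<or> t = 2 \<or> t = 3 \<or> t = 4 \<or> t = 5 \<or> t = 6"
  by auto

definition D_pattern :: "nat \<Rightarrow> (nat \<times> nat) list" where
  "D_pattern i =
    (if i = 1 then [(1,0),(1,2),(2,3),(3,4),(4,5),(5,6),(6,0)]
     else if i = 2 then [(1,0),(2,1),(2,3),(3,4),(4,5),(5,6),(6,0)]
     else if i = 3 then [(1,0),(1,2),(3,2),(3,4),(4,5),(5,6),(6,0)]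
     else if i = 4 then [(1,0),(1,2),(2,3),(4,3),(4,5),(5,6),(6,0)]
     else if i = 5 then [(1,0),(2,1),(3,2),(3,4),(4,5),(5,6),(6,0)]
     else if i = 6 then [(1,0),(2,1),(2,3),(3,4),(5,4),(5,6),(6,0)]
     else [(1,0),(1,2),(3,2),(3,4),(4,5),(6,5),(6,0)])"

lemma D_arcs_eq_image_pattern: "D_arcs i u = (\<lambda>(s, t). (u s, u t)) ` set (D_pattern i)"
  by (simp add: D_pattern_def)

declare D_arcs.simps [simp del]

lemma D_pattern_arc_bounds: "(s, t) \<in> set (D_pattern i) \<Longrightarrow> s < 7 \<and> t < 7 \<and> s \<noteq> t"
  by (auto simp: D_pattern_def split: if_splits)

lemma card_D_arcs_le: "card (D_arcs i u) \<le> 7"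
proof -
  have "card (D_arcs i u) \<le> card (set (D_pattern i))"
    unfolding D_arcs_eq_image_pattern by (rule card_image_le) simp
  also have "\<dots> \<le> 7"
    using card_length[of "D_pattern i"] by (simp add: D_pattern_def)
  finally show ?thesis .
qed

lemma D_arcs_comp: "(a, b) \<in> D_arcs i u \<Longrightarrow> (g a, g b) \<in> D_arcs i (g \<circ> u)"
  unfolding D_arcs_eq_image_pattern by auto

lemma D_arcs_subset_complete_sym_arcs:
  assumes "inj_on u {0..<7}" and "u ` {0..<7} \<subseteq> V"
  shows "D_arcs i u \<subseteq> complete_sym_arcs V"
proof
  fix a assume "a \<in> D_arcs i u"
  then obtain s t where st: "(s, t) \<in> set (D_pattern i)" and a: "a = (u s, u t)"
    unfolding D_arcs_eq_image_pattern by auto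
  from D_pattern_arc_bounds[OF st] assms have "u s \<noteq> u t" "u s \<in> V" "u t \<in> V"
    by (auto simp: inj_on_def)
  then show "a \<in> complete_sym_arcs V"
    by (simp add: a complete_sym_arcs_def)
qed

lemma finite_complete_sym_arcs: "finite V \<Longrightarrow> finite (complete_sym_arcs V)"
  by (rule finite_subset[of _ "V \<times> V"]) (auto simp: complete_sym_arcs_def)

lemma card_complete_sym_arcs:
  assumes "finite V"
  shows "card (complete_sym_arcs V) = card V * (card V - 1)"
proof -
  have "complete_sym_arcs V = V \<times> V - (\<lambda>x. (x, x)) ` V"
    by (auto simp: complete_sym_arcs_def)
  moreover have "card ((\<lambda>x. (x, x)) ` V) = card V"
    by (rule card_image) (auto intro: inj_onI)
  ultimately have "card (complete_sym_arcs V) = card V * card V - card V"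
    using assms by (simp add: card_Diff_subset card_cartesian_product image_subset_iff)
  then show ?thesis
    by (simp add: diff_mult_distrib2)
qed

lemma tight_cover_unique_index:
  assumes "finite I" and "\<And>j. j \<in> I \<Longrightarrow> finite (B j)"
    and "(\<Sum>j\<in>I. card (B j)) \<le> card (\<Union>j\<in>I. B j)"
    and "j \<in> I" "k \<in> I" "x \<in> B j" "x \<in> B k"
  shows "j = k"
proof (rule ccontr)
  assume "j \<noteq> k"
  let ?R = "\<Union>l\<in>I - {j}. B l"
  have fin: "finite (B j)" "finite ?R" using assms(1,2,4) by auto
  have "x \<in> B j \<inter> ?R" using \<open>j \<noteq> k\<close> assms(5-7) by blast
  then have "0 < card (B j \<inter> ?R)" using fin by (auto simp: card_gt_0_iff)
  moreover have "(\<Union>l\<in>I. B l) = B j \<union> ?R" using assms(4) by blast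
  then have "card (B j) + card ?R = card (\<Union>l\<in>I. B l) + card (B j \<inter> ?R)"
    using card_Un_Int[OF fin] by simp
  moreover have "card ?R \<le> (\<Sum>l\<in>I - {j}. card (B l))"
    using assms(1) by (intro card_UN_le) auto
  moreover have "(\<Sum>l\<in>I. card (B l)) = card (B j) + (\<Sum>l\<in>I - {j}. card (B l))"
    using sum.remove[OF assms(1,4)] .
  ultimately show False using assms(3) by linarith
qed

lemma has_D_decompositionI:
  fixes \<U> :: "(nat \<Rightarrow> 'a) set"
  assumes "finite \<U>"
    and copy: "\<And>u. u \<in> \<U> \<Longrightarrow> inj_on u {0..<7} \<and> u ` {0..<7} \<subseteq> V"
    and cover: "\<And>a. a \<in> complete_sym_arcs V \<Longrightarrow> \<exists>u\<in>\<U>. a \<in> D_arcs i u"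
    and count: "7 * card \<U> \<le> card (complete_sym_arcs V)"
  shows "has_D_decomposition i V"
proof -
  have "(\<Union>u\<in>\<U>. D_arcs i u) \<subseteq> complete_sym_arcs V"
  proof (rule UN_least)
    fix u assume "u \<in> \<U>"
    with copy show "D_arcs i u \<subseteq> complete_sym_arcs V"
      by (intro D_arcs_subset_complete_sym_arcs) auto
  qed
  moreover have "complete_sym_arcs V \<subseteq> (\<Union>u\<in>\<U>. D_arcs i u)"
    using cover by blast
  ultimately have union: "(\<Union>u\<in>\<U>. D_arcs i u) = complete_sym_arcs V" by (rule antisym)
  have "(\<Sum>u\<in>\<U>. card (D_arcs i u)) \<le> card \<U> * 7"
    using sum_bounded_above[of \<U> "\<lambda>u. card (D_arcs i u)" 7, OF card_D_arcs_le] by simp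
  with count union have tight: "(\<Sum>u\<in>\<U>. card (D_arcs i u)) \<le> card (\<Union>u\<in>\<U>. D_arcs i u)"
    by simp
  show ?thesis unfolding has_D_decomposition_def
  proof (intro exI[of _ "D_arcs i ` \<U>"] conjI ballI)
    fix B assume "B \<in> D_arcs i ` \<U>"
    then obtain u where "u \<in> \<U>" "B = D_arcs i u" by blast
    with copy show "is_D_copy i V B" unfolding is_D_copy_def by blast
  next
    fix a assume "a \<in> complete_sym_arcs V"
    then obtain u where u: "u \<in> \<U>" "a \<in> D_arcs i u" using cover by blast
    show "\<exists>!B. B \<in> D_arcs i ` \<U> \<and> a \<in> B"
    proof (rule ex1I[of _ "D_arcs i u"])
      fix B assume "B \<in> D_arcs i ` \<U> \<and> a \<in> B"
      then obtain w where "w \<in> \<U>" "B = D_arcs i w" "a \<in> D_arcs i w" by blast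
      moreover have "finite (D_arcs i w)" for w by (simp add: D_arcs_eq_image_pattern)
      ultimately show "B = D_arcs i u"
        using tight_cover_unique_index[where B = "D_arcs i", OF \<open>finite \<U>\<close> _ tight _ u(1) _ u(2)] by blast
    qed (use u in blast)
  qed
qed

text \<open>\<open>reflection i\<close> is the reflection \<open>t \<mapsto> r - t\<close> of \<open>\<int>\<^sub>7\<close> that maps \<open>D_i\<close> onto its converse;
  every \<open>D_i\<close> orients the 7-cycle \<open>v\<^sub>0 v\<^sub>1 \<dots> v\<^sub>6\<close>.\<close>

definition reflection :: "nat \<Rightarrow> nat \<Rightarrow> nat" where
  "reflection i t = ([1,2,3,4,3,2,1] ! (i - 1) + 7 - t) mod 7"

lemma D_pattern_orients_cycle:
  assumes "i \<in> {1..7}" and "t < 7"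
  shows "(t, (t + 1) mod 7) \<in> set (D_pattern i) \<or> ((t + 1) mod 7, t) \<in> set (D_pattern i)"
  using in_1_to_7_cases[OF assms(1)] less_7_cases[OF assms(2)]
  by (elim disjE) (simp_all add: D_pattern_def)

lemma D_pattern_reflection:
  assumes "i \<in> {1..7}" and "(s, t) \<in> set (D_pattern i)"
  shows "(reflection i t, reflection i s) \<in> set (D_pattern i)"
proof -
  have "\<forall>(s, t)\<in>set (D_pattern i). (reflection i t, reflection i s) \<in> set (D_pattern i)"
    using in_1_to_7_cases[OF assms(1)] by (elim disjE) (simp_all add: D_pattern_def reflection_def)
  with assms(2) show ?thesis by blast
qed

lemma reflection_reflection:
  assumes "i \<in> {1..7}" and "t < 7"
  shows "reflection i (reflection i t) = t"
  using in_1_to_7_cases[OF assms(1)] less_7_cases[OF assms(2)]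
  by (elim disjE) (simp_all add: reflection_def)

lemma inj_on_reflection: "i \<in> {1..7} \<Longrightarrow> inj_on (reflection i) {0..<7}"
  by (rule inj_on_inverseI[where g = "reflection i"]) (simp add: reflection_reflection)

lemma reflection_less: "reflection i t < 7"
  by (simp add: reflection_def)

lemma D_arcs_comp_reflection:
  assumes i: "i \<in> {1..7}"
  shows "D_arcs i (u \<circ> reflection i) = (D_arcs i u)\<inverse>"
proof
  show "D_arcs i (u \<circ> reflection i) \<subseteq> (D_arcs i u)\<inverse>"
    using D_pattern_reflection[OF i] by (force simp: D_arcs_eq_image_pattern)
next
  show "(D_arcs i u)\<inverse> \<subseteq> D_arcs i (u \<circ> reflection i)"
  proof
    fix a assume "a \<in> (D_arcs i u)\<inverse>"
    then obtain s t where st: "(s, t) \<in> set (D_pattern i)" and a: "a = (u t, u s)"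
      by (auto simp: D_arcs_eq_image_pattern)
    have "(reflection i t, reflection i s) \<in> set (D_pattern i)"
      using D_pattern_reflection[OF i st] .
    moreover have "reflection i (reflection i t) = t" "reflection i (reflection i s) = s"
      using D_pattern_arc_bounds[OF st] reflection_reflection[OF i] by auto
    ultimately show "a \<in> D_arcs i (u \<circ> reflection i)"
      unfolding D_arcs_eq_image_pattern a by force
  qed
qed

lemma cycle_edge_in_D_arcs_reflection_pair:
  assumes i: "i \<in> {1..7}" and "t < 7" and pq: "{p, q} = {u t, u ((t + 1) mod 7)}"
  shows "(p, q) \<in> D_arcs i u \<union> D_arcs i (u \<circ> reflection i)"
proof -
  have "(u t, u ((t + 1) mod 7)) \<in> D_arcs i u \<union> (D_arcs i u)\<inverse>"
    using D_pattern_orients_cycle[OF assms(1,2)] by (force simp: D_arcs_eq_image_pattern)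
  with pq have "(p, q) \<in> D_arcs i u \<union> (D_arcs i u)\<inverse>"
    by (auto simp: doubleton_eq_iff)
  then show ?thesis
    by (simp add: D_arcs_comp_reflection[OF i])
qed

definition arcs_off_hole :: "nat \<Rightarrow> nat \<Rightarrow> (nat \<times> nat) set" where
  "arcs_off_hole N H = complete_sym_arcs {0..<N} - complete_sym_arcs {H..<N}"

lemma mem_arcs_off_hole:
  "(a, b) \<in> arcs_off_hole N H \<longleftrightarrow> a < N \<and> b < N \<and> a \<noteq> b \<and> (a < H \<or> b < H)"
  by (auto simp: arcs_off_hole_def complete_sym_arcs_def)

lemma card_arcs_off_hole:
  assumes "H \<le> N"
  shows "card (arcs_off_hole N H) = N * (N - 1) - (N - H) * (N - H - 1)"
proof -
  have "complete_sym_arcs {H..<N} \<subseteq> complete_sym_arcs {0..<N}"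
    by (auto simp: complete_sym_arcs_def)
  then show ?thesis
    by (simp add: arcs_off_hole_def card_Diff_subset finite_complete_sym_arcs card_complete_sym_arcs)
qed

text \<open>A block \<open>xs\<close> of a list design stands for the copy \<open>D_i[xs!0, \<dots>, xs!6]\<close>; a list
  design of \<open>(N, H)\<close> is a \<open>D_i\<close>-decomposition of \<open>K*_N\<close> with a hole \<open>K*\<close> on \<open>{H..<N}\<close>,
  certified by arc-distinctness and an arc count.\<close>

definition block_arc_list :: "nat \<Rightarrow> nat list \<Rightarrow> (nat \<times> nat) list" where
  "block_arc_list i xs = map (\<lambda>(s, t). (xs ! s, xs ! t)) (D_pattern i)"

definition is_list_design :: "nat \<Rightarrow> nat \<Rightarrow> nat \<Rightarrow> nat list list \<Rightarrow> bool" where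
  "is_list_design i N H T \<longleftrightarrow>
     (\<forall>xs\<in>set T. length xs = 7 \<and> distinct xs \<and> set xs \<subseteq> {..<N}) \<and>
     distinct (concat (map (block_arc_list i) T)) \<and>
     set (concat (map (block_arc_list i) T)) \<subseteq> arcs_off_hole N H \<and>
     7 * length T = N * (N - 1) - (N - H) * (N - H - 1)"

lemma set_block_arc_list: "set (block_arc_list i xs) = D_arcs i ((!) xs)"
  by (simp add: block_arc_list_def D_arcs_eq_image_pattern)

lemma length_block_arc_list: "length (block_arc_list i xs) = 7"
  by (simp add: block_arc_list_def D_pattern_def)

lemma list_design_block:
  assumes "is_list_design i N H T" and "xs \<in> set T"
  shows "inj_on ((!) xs) {0..<7} \<and> (!) xs ` {0..<7} \<subseteq> {..<N}"
proof -
  have xs: "length xs = 7" "distinct xs" "set xs \<subseteq> {..<N}"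
    using assms by (auto simp: is_list_design_def)
  then have "inj_on ((!) xs) {0..<7}" by (intro inj_on_nth) auto
  moreover have "xs ! t \<in> set xs" if "t < 7" for t
    using that xs(1) by simp
  then have "(!) xs ` {0..<7} \<subseteq> {..<N}" using xs(3) by fastforce
  ultimately show ?thesis ..
qed

lemma list_design_covers:
  assumes T: "is_list_design i N H T" and "H \<le> N" and a: "a \<in> arcs_off_hole N H"
  shows "\<exists>xs\<in>set T. a \<in> D_arcs i ((!) xs)"
proof -
  let ?arcs = "concat (map (block_arc_list i) T)"
  have "distinct ?arcs" and count: "7 * length T = N * (N - 1) - (N - H) * (N - H - 1)"
    using T unfolding is_list_design_def by blast+
  moreover have "length ?arcs = 7 * length T"
    by (induction T) (simp_all add: length_block_arc_list)
  ultimately have "card (set ?arcs) = card (arcs_off_hole N H)"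
    using \<open>H \<le> N\<close> by (simp only: distinct_card card_arcs_off_hole)
  moreover have "finite (arcs_off_hole N H)"
    by (simp add: arcs_off_hole_def finite_complete_sym_arcs)
  moreover have "set ?arcs \<subseteq> arcs_off_hole N H"
    using T unfolding is_list_design_def by blast
  ultimately have "set ?arcs = arcs_off_hole N H"
    using card_subset_eq by blast
  with a obtain xs where "xs \<in> set T" "a \<in> set (block_arc_list i xs)"
    by auto
  then show ?thesis
    by (auto simp only: set_block_arc_list)
qed

text \<open>Mixed blocks live on \<open>\<int>\<^sub>m \<times> \<int>\<^sub>7\<close>, the point \<open>(x, a)\<close> being the vertex \<open>7x + a\<close>.
  The base cycle \<open>(0,0) (d,1) (0,4) (d,2) (0,6) (d,5) (2d,0)\<close> has six edges of
  \<open>\<int>\<^sub>m\<close>-length \<open>d\<close>, realising every nonzero \<open>\<int>\<^sub>7\<close>-difference once, and a closing edge of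
  \<open>\<int>\<^sub>m\<close>-length \<open>2d\<close> and \<open>\<int>\<^sub>7\<close>-difference 0.\<close>

definition mix_group :: "nat \<Rightarrow> nat" where
  "mix_group t = [0,1,0,1,0,1,2] ! t"

definition mix_point :: "nat \<Rightarrow> nat" where
  "mix_point t = [0,1,4,2,6,5,0] ! t"

definition mix_vertex :: "nat \<Rightarrow> nat \<Rightarrow> nat \<Rightarrow> nat \<Rightarrow> nat \<Rightarrow> nat" where
  "mix_vertex m d z c t = 7 * ((z + mix_group t * d) mod m) + (c + mix_point t) mod 7"

definition mixed_cycle_edge :: "nat \<Rightarrow> nat \<Rightarrow> nat \<Rightarrow> bool" where
  "mixed_cycle_edge m p q \<longleftrightarrow>
     (\<exists>d z c t. 1 \<le> d \<and> 2 * d < m \<and> z < m \<and> c < 7 \<and> t < 7 \<and>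
        {p, q} = {mix_vertex m d z c t, mix_vertex m d z c ((t + 1) mod 7)})"

lemma mixed_cycle_edge_witness:
  assumes "1 \<le> d" "2 * d < m" "z < m" "c < 7" "t < 7"
    and "{p, q} = {mix_vertex m d z c t, mix_vertex m d z c ((t + 1) mod 7)}"
  shows "mixed_cycle_edge m p q"
  using assms unfolding mixed_cycle_edge_def by blast

lemma mixed_cycle_edge_commute: "mixed_cycle_edge m p q \<longleftrightarrow> mixed_cycle_edge m q p"
  by (simp add: mixed_cycle_edge_def insert_commute)

lemma mix_point_less: "t < 7 \<Longrightarrow> mix_point t < 7"
  by (drule less_7_cases) (auto simp: mix_point_def)

lemma mix_point_eq:
  "t < 7 \<Longrightarrow> t' < 7 \<Longrightarrow> mix_point t = mix_point t' \<Longrightarrow> t = t' \<or> {t, t'} = {0, 6}"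
  by (drule less_7_cases, drule less_7_cases) (auto simp: mix_point_def)

lemma mix_vertex_div: "mix_vertex m d z c t div 7 = (z + mix_group t * d) mod m"
  by (simp add: mix_vertex_def)

lemma mix_vertex_mod: "mix_vertex m d z c t mod 7 = (c + mix_point t) mod 7"
  by (simp add: mix_vertex_def)

lemma mix_vertex_less: "0 < m \<Longrightarrow> mix_vertex m d z c t < 7 * m"
proof -
  assume "0 < m"
  then have "(z + mix_group t * d) mod m + 1 \<le> m" by (simp add: Suc_leI)
  then show ?thesis unfolding mix_vertex_def by linarith
qed

lemma inj_on_mix_vertex:
  assumes "1 \<le> d" and "2 * d < m" and "z < m"
  shows "inj_on (mix_vertex m d z c) {0..<7}"
proof (rule inj_onI)
  fix t t' assume t: "t \<in> {0..<7}" and t': "t' \<in> {0..<7}"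
    and eq: "mix_vertex m d z c t = mix_vertex m d z c t'"
  from arg_cong[OF eq, of "\<lambda>v. v mod 7"] have "[c + mix_point t = c + mix_point t'] (mod 7)"
    by (simp add: mix_vertex_mod cong_def)
  then have "mix_point t = mix_point t'"
    using t t' mix_point_less by (simp add: cong_add_lcancel_nat cong_less_modulus_unique_nat)
  then have "t = t' \<or> {t, t'} = {0, 6}"
    using t t' mix_point_eq by simp
  moreover have "(z + 2 * d) mod m \<noteq> z mod m"
  proof
    assume "(z + 2 * d) mod m = z mod m"
    then have "[z + 2 * d = z + 0] (mod m)" by (simp add: cong_def)
    then have "[2 * d = 0] (mod m)" by (simp only: cong_add_lcancel_nat)
    with assms show False by (auto simp: cong_0_iff dest: dvd_imp_le)
  qed
  moreover have "(z + mix_group t * d) mod m = (z + mix_group t' * d) mod m"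
    using arg_cong[OF eq, of "\<lambda>v. v div 7"] by (simp add: mix_vertex_div)
  ultimately show "t = t'"
    by (auto simp: mix_group_def doubleton_eq_iff)
qed

text \<open>Choosing \<open>z\<close> and \<open>c\<close> so that vertex \<open>s\<close> of the base cycle lands on \<open>(x, a)\<close>.\<close>

lemma mix_vertex_translate:
  assumes "s < 7" and "mix_group s \<le> mix_group t" and "mix_group s * d \<le> m"
  shows "mix_vertex m d ((x + (m - mix_group s * d)) mod m) ((a + 7 - mix_point s) mod 7) t
       = 7 * ((x + (mix_group t - mix_group s) * d) mod m) + (a + (mix_point t + 7 - mix_point s) mod 7) mod 7"
proof -
  have le: "mix_group s * d \<le> mix_group t * d" using assms(2) by (rule mult_le_mono1)
  have "((x + (m - mix_group s * d)) mod m + mix_group t * d) mod m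
      = (x + (m - mix_group s * d) + mix_group t * d) mod m"
    by (rule mod_add_left_eq)
  also have "x + (m - mix_group s * d) + mix_group t * d = x + (mix_group t - mix_group s) * d + m"
    unfolding diff_mult_distrib using le assms(3) by linarith
  also have "(x + (mix_group t - mix_group s) * d + m) mod m = (x + (mix_group t - mix_group s) * d) mod m"
    by simp
  finally have "((x + (m - mix_group s * d)) mod m + mix_group t * d) mod m
      = (x + (mix_group t - mix_group s) * d) mod m" .
  moreover have "a + 7 - mix_point s + mix_point t = a + (mix_point t + 7 - mix_point s)"
    using mix_point_less[OF assms(1)] by simp
  then have "((a + 7 - mix_point s) mod 7 + mix_point t) mod 7
      = (a + (mix_point t + 7 - mix_point s) mod 7) mod 7"
    by (simp only: mod_add_left_eq mod_add_right_eq)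
  ultimately show ?thesis
    by (simp add: mix_vertex_def)
qed

lemma mix_base_cycle_difference:
  assumes "0 < f" and "f < 7"
  shows "\<exists>s t. s < 7 \<and> t < 7 \<and> (t = (s + 1) mod 7 \<or> s = (t + 1) mod 7) \<and>
           mix_group s \<le> 1 \<and> mix_group t = mix_group s + 1 \<and>
           (mix_point t + 7 - mix_point s) mod 7 = f"
proof -
  have "f = 1 \<or> f = 2 \<or> f = 3 \<or> f = 4 \<or> f = 5 \<or> f = 6" using assms by auto
  then show ?thesis
  proof (elim disjE)
    assume f: "f = 1"
    show ?thesis by (rule exI[of _ 0], rule exI[of _ 1]) (simp add: f mix_group_def mix_point_def)
  next
    assume f: "f = 2"
    show ?thesis by (rule exI[of _ 5], rule exI[of _ 6]) (simp add: f mix_group_def mix_point_def)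
  next
    assume f: "f = 3"
    show ?thesis by (rule exI[of _ 4], rule exI[of _ 3]) (simp add: f mix_group_def mix_point_def)
  next
    assume f: "f = 4"
    show ?thesis by (rule exI[of _ 2], rule exI[of _ 1]) (simp add: f mix_group_def mix_point_def)
  next
    assume f: "f = 5"
    show ?thesis by (rule exI[of _ 2], rule exI[of _ 3]) (simp add: f mix_group_def mix_point_def)
  next
    assume f: "f = 6"
    show ?thesis by (rule exI[of _ 4], rule exI[of _ 5]) (simp add: f mix_group_def mix_point_def)
  qed
qed

lemma mixed_cycle_edge_distinct_points:
  assumes "1 \<le> e" and "2 * e < m" and "x < m" and "a < 7" and "b < 7" and "a \<noteq> b"
  shows "mixed_cycle_edge m (7 * x + a) (7 * ((x + e) mod m) + b)"
proof -
  define f where "f = (b + 7 - a) mod 7"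
  have "0 < f" "f < 7"
    using less_7_cases[OF assms(4)] less_7_cases[OF assms(5)] assms(6)
    unfolding f_def by (elim disjE; simp)+
  then obtain s t where st: "s < 7" "t < 7" "t = (s + 1) mod 7 \<or> s = (t + 1) mod 7"
    and group: "mix_group s \<le> 1" "mix_group t = mix_group s + 1"
    and point: "(mix_point t + 7 - mix_point s) mod 7 = f"
    using mix_base_cycle_difference by blast
  define z c where "z = (x + (m - mix_group s * e)) mod m" and "c = (a + 7 - mix_point s) mod 7"
  have le: "mix_group s * e \<le> m" using group(1) assms(2) by (cases "mix_group s") auto
  have vs: "mix_vertex m e z c s = 7 * x + a"
    using mix_vertex_translate[OF st(1) order.refl le] assms(3,4) mix_point_less[OF st(1)]
    by (simp add: z_def c_def)
  have "(a + f) mod 7 = b"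
    using assms(4,5) by (simp add: f_def mod_add_right_eq)
  then have vt: "mix_vertex m e z c t = 7 * ((x + e) mod m) + b"
    using mix_vertex_translate[of s "t", OF st(1) _ le] group point by (simp add: z_def c_def)
  have zc: "z < m" "c < 7" using assms(2) by (auto simp: z_def c_def)
  from st(3) show ?thesis
  proof
    assume "t = (s + 1) mod 7"
    with vs vt zc st(1) assms(1,2) show ?thesis
      by (intro mixed_cycle_edge_witness[where d = e and z = z and c = c and t = s]) auto
  next
    assume "s = (t + 1) mod 7"
    with vs vt zc st(2) assms(1,2) show ?thesis
      by (intro mixed_cycle_edge_witness[where d = e and z = z and c = c and t = t]) auto
  qed
qed

lemma mod_add_diff_cancel:
  fixes x e m :: nat
  assumes "e \<le> m" and "x < m"
  shows "((x + e) mod m + (m - e)) mod m = x"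
proof -
  have "((x + e) mod m + (m - e)) mod m = (x + e + (m - e)) mod m"
    by (rule mod_add_left_eq)
  also have "x + e + (m - e) = x + m" using assms(1) by simp
  finally show ?thesis using assms(2) by simp
qed

text \<open>Equal points are joined by the closing edge of a base cycle with \<open>2d \<equiv> \<plusminus>e\<close>, which
  exists because \<open>m\<close> is odd.\<close>

lemma mixed_cycle_edge_equal_points:
  assumes "odd m" and "1 \<le> e" and "2 * e < m" and "x < m" and "a < 7"
  shows "mixed_cycle_edge m (7 * x + a) (7 * ((x + e) mod m) + a)"
proof (cases "even e")
  case True
  define d where "d = e div 2"
  have "mix_vertex m d x a 6 = 7 * ((x + e) mod m) + a" "mix_vertex m d x a 0 = 7 * x + a"
    using True assms(4,5) by (simp_all add: mix_vertex_def mix_group_def mix_point_def d_def)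
  moreover have "1 \<le> d" "2 * d < m" using True assms(2,3) by (auto simp: d_def)
  ultimately show ?thesis
    using assms(4,5) by (intro mixed_cycle_edge_witness[where d = d and z = x and c = a and t = 6]) auto
next
  case False
  define d y where "d = (m - e) div 2" and "y = (x + e) mod m"
  have d: "2 * d = m - e" using False assms(1) by (simp add: d_def)
  have "(y + (m - e)) mod m = x"
    unfolding y_def using assms(3,4) by (intro mod_add_diff_cancel) auto
  then have "mix_vertex m d y a 6 = 7 * x + a"
    using d assms(5) by (simp add: mix_vertex_def mix_group_def mix_point_def)
  moreover have "mix_vertex m d y a 0 = 7 * y + a"
    using assms(5) by (simp add: mix_vertex_def mix_group_def mix_point_def y_def)
  moreover have "1 \<le> d" "2 * d < m" "y < m" using d assms(2,3) by (auto simp: y_def)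
  ultimately show ?thesis
    using assms(5) y_def by (intro mixed_cycle_edge_witness[where d = d and z = y and c = a and t = 6]) auto
qed

lemma mixed_cycle_edge_if_groups_differ:
  assumes "odd m" and "p < 7 * m" and "q < 7 * m" and "p div 7 \<noteq> q div 7"
  shows "mixed_cycle_edge m p q"
proof -
  have shifted: "mixed_cycle_edge m P Q"
    if "1 \<le> e" "2 * e < m" "x < m" "P = 7 * x + P mod 7" "Q = 7 * ((x + e) mod m) + Q mod 7"
    for x e P Q
  proof -
    have "mixed_cycle_edge m (7 * x + P mod 7) (7 * ((x + e) mod m) + Q mod 7)"
      using that(1-3) assms(1) mixed_cycle_edge_distinct_points mixed_cycle_edge_equal_points
      by (cases "P mod 7 = Q mod 7") auto
    with that(4,5) show ?thesis by simp
  qed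
  define x y where "x = p div 7" and "y = q div 7"
  have "x < m" "y < m" "x \<noteq> y"
    using assms(2-4) by (simp_all add: x_def y_def less_mult_imp_div_less)
  define e where "e = (y + (m - x)) mod m"
  have "e < m" using \<open>x < m\<close> by (simp add: e_def)
  have "(x + e) mod m = (x + (y + (m - x))) mod m"
    by (simp only: e_def mod_add_right_eq)
  also have "x + (y + (m - x)) = y + m" using \<open>x < m\<close> by simp
  finally have y: "(x + e) mod m = y" using \<open>y < m\<close> by simp
  with \<open>x \<noteq> y\<close> \<open>x < m\<close> have "0 < e" by (cases e) auto
  have x: "(y + (m - e)) mod m = x"
    unfolding y[symmetric] using \<open>e < m\<close> \<open>x < m\<close> by (intro mod_add_diff_cancel) auto
  have p: "p = 7 * x + p mod 7" and q: "q = 7 * y + q mod 7"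
    by (simp_all add: x_def y_def)
  show ?thesis
  proof (cases "2 * e < m")
    case True
    have q': "q = 7 * ((x + e) mod m) + q mod 7" unfolding y by (fact q)
    show ?thesis
      using \<open>0 < e\<close> by (intro shifted[OF _ True \<open>x < m\<close> p q']) simp
  next
    case False
    moreover have "2 * e \<noteq> m" using assms(1) by auto
    ultimately have "1 \<le> m - e" "2 * (m - e) < m" using \<open>e < m\<close> by auto
    moreover have p': "p = 7 * ((y + (m - e)) mod m) + p mod 7" unfolding x by (fact p)
    ultimately have "mixed_cycle_edge m q p"
      using shifted[OF _ _ \<open>y < m\<close> q p'] by blast
    then show ?thesis by (rule mixed_cycle_edge_commute[THEN iffD1])
  qed
qed

definition local_vertex :: "nat \<Rightarrow> nat \<Rightarrow> nat \<Rightarrow> nat" where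
  "local_vertex m x l = (if l < 7 then 7 * x + l else 7 * m + (l - 7))"

lemma inj_local_vertex: "x < m \<Longrightarrow> inj (local_vertex m x)"
  by (auto simp: inj_def local_vertex_def split: if_splits)

definition mixed_blocks :: "nat \<Rightarrow> nat \<Rightarrow> (nat \<Rightarrow> nat) set" where
  "mixed_blocks i m =
     (\<lambda>(d, z, c, r). mix_vertex m d z c \<circ> r) ` ({1..m div 2} \<times> {..<m} \<times> {..<7} \<times> {id, reflection i})"

definition local_blocks :: "nat \<Rightarrow> nat list list \<Rightarrow> (nat \<Rightarrow> nat) set" where
  "local_blocks m T = (\<lambda>(x, xs). local_vertex m x \<circ> (!) xs) ` ({..<m} \<times> set T)"

definition hole_blocks :: "nat \<Rightarrow> nat list list \<Rightarrow> (nat \<Rightarrow> nat) set" where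
  "hole_blocks m S = (\<lambda>xs. (+) (7 * m) \<circ> (!) xs) ` set S"

definition blocks :: "nat \<Rightarrow> nat \<Rightarrow> nat list list \<Rightarrow> nat list list \<Rightarrow> (nat \<Rightarrow> nat) set" where
  "blocks i m T S = mixed_blocks i m \<union> local_blocks m T \<union> hole_blocks m S"

lemma mixed_blocks_are_copies:
  assumes "odd m" and "i \<in> {1..7}" and "u \<in> mixed_blocks i m"
  shows "inj_on u {0..<7} \<and> u ` {0..<7} \<subseteq> {0..<7 * m + h}"
proof -
  from assms(3) obtain w where w: "w \<in> {1..m div 2} \<times> {..<m} \<times> {..<7::nat} \<times> {id, reflection i}"
    and u: "u = (\<lambda>(d, z, c, r). mix_vertex m d z c \<circ> r) w"
    unfolding mixed_blocks_def by (rule imageE)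
  obtain d z c r where "w = (d, z, c, r)" by (cases w) blast
  with w u have u: "u = mix_vertex m d z c \<circ> r" and "1 \<le> d" "d \<le> m div 2" "z < m"
    and r: "r \<in> {id, reflection i}"
    by auto
  then have "2 * d < m" using assms(1) by presburger
  then have "inj_on (mix_vertex m d z c) {0..<7}"
    using inj_on_mix_vertex \<open>1 \<le> d\<close> \<open>z < m\<close> by blast
  moreover have "r ` {0..<7} \<subseteq> {0..<7}"
    using r reflection_less by auto
  ultimately have "inj_on (mix_vertex m d z c) (r ` {0..<7})"
    by (rule inj_on_subset)
  moreover have "inj_on r {0..<7}"
    using r inj_on_reflection[OF assms(2)] by auto
  ultimately have "inj_on (mix_vertex m d z c \<circ> r) {0..<7}"
    by (intro comp_inj_on)
  then have "inj_on u {0..<7}"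
    by (simp only: u)
  moreover have "mix_vertex m d z c t < 7 * m + h" for t
    using mix_vertex_less[of m d z c t] \<open>z < m\<close> by simp
  then have "u ` {0..<7} \<subseteq> {0..<7 * m + h}"
    by (auto simp: u)
  ultimately show ?thesis ..
qed

lemma local_blocks_are_copies:
  assumes T: "is_list_design i (7 + h) 7 T" and "u \<in> local_blocks m T"
  shows "inj_on u {0..<7} \<and> u ` {0..<7} \<subseteq> {0..<7 * m + h}"
proof -
  obtain x xs where u: "u = local_vertex m x \<circ> (!) xs" and "x < m" and xs: "xs \<in> set T"
    using assms(2) unfolding local_blocks_def by auto
  have "inj_on ((!) xs) {0..<7}" and range: "(!) xs ` {0..<7} \<subseteq> {..<7 + h}"
    using list_design_block[OF T xs] by auto
  then have "inj_on u {0..<7}"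
    using inj_on_subset[OF inj_local_vertex[OF \<open>x < m\<close>] subset_UNIV] unfolding u by (intro comp_inj_on)
  moreover have "local_vertex m x l < 7 * m + h" if "l < 7 + h" for l
    using that \<open>x < m\<close> by (auto simp: local_vertex_def)
  with range have "u ` {0..<7} \<subseteq> {0..<7 * m + h}" by (auto simp: u)
  ultimately show ?thesis ..
qed

lemma hole_blocks_are_copies:
  assumes S: "is_list_design i h h S" and "u \<in> hole_blocks m S"
  shows "inj_on u {0..<7} \<and> u ` {0..<7} \<subseteq> {0..<7 * m + h}"
proof -
  obtain xs where u: "u = (+) (7 * m) \<circ> (!) xs" and xs: "xs \<in> set S"
    using assms(2) unfolding hole_blocks_def by auto
  then show ?thesis
    using list_design_block[OF S xs] by (auto simp: u inj_on_def)
qed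

lemma mixed_arc_covered:
  assumes "odd m" and "i \<in> {1..7}" and "p < 7 * m" and "q < 7 * m" and "p div 7 \<noteq> q div 7"
  shows "\<exists>u\<in>mixed_blocks i m. (p, q) \<in> D_arcs i u"
proof -
  obtain d z c t where "1 \<le> d" "2 * d < m" "z < m" "c < 7" "t < 7"
    and pq: "{p, q} = {mix_vertex m d z c t, mix_vertex m d z c ((t + 1) mod 7)}"
    using mixed_cycle_edge_if_groups_differ[OF assms(1,3-5)] unfolding mixed_cycle_edge_def by blast
  moreover from \<open>2 * d < m\<close> have "d \<le> m div 2" by presburger
  ultimately have blocks: "mix_vertex m d z c \<circ> r \<in> mixed_blocks i m" if "r \<in> {id, reflection i}" for r
    unfolding mixed_blocks_def using that by (intro image_eqI[where x = "(d, z, c, r)"]) auto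
  have "mix_vertex m d z c \<in> mixed_blocks i m" "mix_vertex m d z c \<circ> reflection i \<in> mixed_blocks i m"
    using blocks[of id] blocks[of "reflection i"] by simp_all
  with cycle_edge_in_D_arcs_reflection_pair[OF assms(2) \<open>t < 7\<close> pq] show ?thesis
    by blast
qed

lemma local_arc_covered:
  assumes T: "is_list_design i (7 + h) 7 T" and "x < m"
    and l: "(l, l') \<in> arcs_off_hole (7 + h) 7"
  shows "\<exists>u\<in>local_blocks m T. (local_vertex m x l, local_vertex m x l') \<in> D_arcs i u"
proof -
  obtain xs where xs: "xs \<in> set T" "(l, l') \<in> D_arcs i ((!) xs)"
    using list_design_covers[OF T _ l] by auto
  then have "local_vertex m x \<circ> (!) xs \<in> local_blocks m T"
    using \<open>x < m\<close> unfolding local_blocks_def by force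
  with D_arcs_comp[OF xs(2)] show ?thesis by blast
qed

lemma hole_arc_covered:
  assumes S: "is_list_design i h h S" and "(l, l') \<in> complete_sym_arcs {0..<h}"
  shows "\<exists>u\<in>hole_blocks m S. (7 * m + l, 7 * m + l') \<in> D_arcs i u"
proof -
  have "(l, l') \<in> arcs_off_hole h h"
    using assms(2) by (simp add: arcs_off_hole_def complete_sym_arcs_def)
  then obtain xs where xs: "xs \<in> set S" "(l, l') \<in> D_arcs i ((!) xs)"
    using list_design_covers[OF S] by blast
  then have "(+) (7 * m) \<circ> (!) xs \<in> hole_blocks m S"
    unfolding hole_blocks_def by blast
  with D_arcs_comp[OF xs(2)] show ?thesis by auto
qed

text \<open>An arc that does not join two different groups \<open>x \<noteq> y\<close> lies in the local design of the
  group of one of its endpoints or in the hole.\<close>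

lemma blocks_cover:
  assumes "odd m" and "i \<in> {1..7}"
    and T: "is_list_design i (7 + h) 7 T" and S: "is_list_design i h h S"
    and pq: "(p, q) \<in> complete_sym_arcs {0..<7 * m + h}"
  shows "\<exists>u\<in>blocks i m T S. (p, q) \<in> D_arcs i u"
proof -
  define local_coord where "local_coord v = (if v < 7 * m then v mod 7 else v - 7 * m + 7)" for v
  have "p < 7 * m + h" "q < 7 * m + h" "p \<noteq> q"
    using pq by (auto simp: complete_sym_arcs_def)
  consider (mixed) "p < 7 * m" "q < 7 * m" "p div 7 \<noteq> q div 7"
    | (group) x where "x < m" "p < 7 * m \<longrightarrow> p div 7 = x" "q < 7 * m \<longrightarrow> q div 7 = x"
        "p < 7 * m \<or> q < 7 * m"
    | (hole) "7 * m \<le> p" "7 * m \<le> q"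
    by (metis less_mult_imp_div_less mult.commute not_le)
  then show ?thesis
  proof cases
    case mixed
    then show ?thesis
      using mixed_arc_covered[OF assms(1,2)] by (auto simp: blocks_def)
  next
    case group
    have inverse: "local_vertex m x (local_coord v) = v" if "v < 7 * m \<longrightarrow> v div 7 = x" for v
      using that by (auto simp: local_vertex_def local_coord_def)
    have p: "local_vertex m x (local_coord p) = p" and q: "local_vertex m x (local_coord q) = q"
      using group(2,3) by (simp_all add: inverse)
    with \<open>p \<noteq> q\<close> have "local_coord p \<noteq> local_coord q" by metis
    with group(4) \<open>p < 7 * m + h\<close> \<open>q < 7 * m + h\<close>
    have "(local_coord p, local_coord q) \<in> arcs_off_hole (7 + h) 7"
      by (auto simp: mem_arcs_off_hole local_coord_def)
    then obtain u where "u \<in> local_blocks m T"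
      and "(local_vertex m x (local_coord p), local_vertex m x (local_coord q)) \<in> D_arcs i u"
      using local_arc_covered[OF T \<open>x < m\<close>] by blast
    then show ?thesis unfolding p q blocks_def by blast
  next
    case hole
    then have "(p - 7 * m, q - 7 * m) \<in> complete_sym_arcs {0..<h}"
      using \<open>p < 7 * m + h\<close> \<open>q < 7 * m + h\<close> \<open>p \<noteq> q\<close> by (auto simp: complete_sym_arcs_def)
    then obtain u where "u \<in> hole_blocks m S" "(7 * m + (p - 7 * m), 7 * m + (q - 7 * m)) \<in> D_arcs i u"
      using hole_arc_covered[OF S] by blast
    with hole show ?thesis unfolding blocks_def by auto
  qed
qed

lemma card_blocks:
  assumes "odd m" and T: "is_list_design i (7 + h) 7 T" and S: "is_list_design i h h S"
  shows "7 * card (blocks i m T S) \<le> card (complete_sym_arcs {0..<7 * m + h})"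
proof -
  obtain k where m: "m = 2 * k + 1" using assms(1) oddE by blast
  have "card (mixed_blocks i m) \<le> card ({1..m div 2} \<times> {..<m} \<times> {..<7::nat} \<times> {id, reflection i})"
    unfolding mixed_blocks_def by (rule card_image_le) simp
  also have "\<dots> = k * m * 7 * card {id, reflection i}"
    by (simp add: card_cartesian_product m algebra_simps)
  also have "\<dots> \<le> k * m * 7 * 2"
    by (intro mult_le_mono2) (simp add: card_insert_if)
  finally have mixed: "card (mixed_blocks i m) \<le> k * m * 14" by simp
  have "card (local_blocks m T) \<le> card ({..<m} \<times> set T)"
    unfolding local_blocks_def by (rule card_image_le) simp
  also have "\<dots> \<le> m * length T"
    by (simp add: card_cartesian_product card_length)
  finally have local: "card (local_blocks m T) \<le> m * length T" .
  have hole: "card (hole_blocks m S) \<le> length S"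
    unfolding hole_blocks_def using card_image_le card_length order_trans by blast
  have "card (blocks i m T S) \<le> card (mixed_blocks i m) + card (local_blocks m T) + card (hole_blocks m S)"
    unfolding blocks_def by (meson card_Un_le add_le_mono1 order_trans)
  moreover have "7 * length T = 42 + 14 * h" and length_S: "7 * length S = h * (h - 1)"
    using T S by (cases h; simp add: is_list_design_def algebra_simps)+
  then have "7 * card (local_blocks m T) \<le> m * (42 + 14 * h)"
    using mult_le_mono2[OF local, of 7] by (simp add: ac_simps)
  moreover have "7 * card (mixed_blocks i m) \<le> 98 * k * m"
    using mixed by simp
  ultimately have "7 * card (blocks i m T S) \<le> 98 * k * m + m * (42 + 14 * h) + h * (h - 1)"
    using hole length_S by linarith
  also have "\<dots> = (7 * m + h) * (7 * m + h - 1)"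
    by (cases h) (simp_all add: m algebra_simps)
  finally show ?thesis
    by (simp add: card_complete_sym_arcs)
qed

theorem has_D_decomposition_7m_plus_hole:
  assumes "odd m" and "i \<in> {1..7}"
    and T: "is_list_design i (7 + h) 7 T" and S: "is_list_design i h h S"
  shows "has_D_decomposition i {0..<7 * m + h}"
proof (rule has_D_decompositionI)
  show "finite (blocks i m T S)"
    by (simp add: blocks_def mixed_blocks_def local_blocks_def hole_blocks_def)
  show "inj_on u {0..<7} \<and> u ` {0..<7} \<subseteq> {0..<7 * m + h}" if "u \<in> blocks i m T S" for u
    using that unfolding blocks_def
    by (elim UnE) (fact mixed_blocks_are_copies[OF assms(1,2)] local_blocks_are_copies[OF T]
      hole_blocks_are_copies[OF S])+
  show "\<exists>u\<in>blocks i m T S. a \<in> D_arcs i u" if "a \<in> complete_sym_arcs {0..<7 * m + h}" for a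
    using that blocks_cover[OF assms] by (cases a) blast
  show "7 * card (blocks i m T S) \<le> card (complete_sym_arcs {0..<7 * m + h})"
    by (rule card_blocks[OF assms(1) T S])
qed

definition design7 :: "nat \<Rightarrow> nat list list" where
  "design7 i = (if i = 1 then [[2,0,6,5,3,1,4], [6,4,5,0,1,2,3], [0,1,5,6,3,2,4], [1,6,4,3,0,5,2], [5,2,6,0,4,1,3], [4,5,1,6,2,0,3]]
    else if i = 2 then [[2,0,6,5,3,1,4], [1,4,5,0,3,2,6], [1,0,3,4,6,2,5], [6,3,1,5,2,4,0], [3,2,1,0,4,5,6], [5,0,2,1,6,4,3]]
    else if i = 3 then [[2,0,6,5,3,1,4], [5,0,1,4,6,2,3], [6,2,5,1,0,4,3], [0,6,3,1,2,4,5], [4,3,0,2,1,6,5], [2,5,1,6,4,0,3]]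
    else if i = 4 then [[2,0,6,5,3,1,4], [6,5,1,2,3,0,4], [1,2,4,5,0,3,6], [3,2,5,4,6,0,1], [0,1,6,2,5,3,4], [0,2,6,3,4,1,5]]
    else if i = 5 then [[2,0,6,5,3,1,4], [5,6,3,0,4,1,2], [0,2,3,4,6,1,5], [4,6,1,2,3,0,5], [2,6,0,1,3,4,5], [1,0,4,2,6,3,5]]
    else if i = 6 then [[2,0,6,5,3,1,4], [1,5,2,6,3,4,0], [3,2,6,4,5,1,0], [2,1,3,4,6,0,5], [1,6,3,2,0,5,4], [6,5,3,0,4,2,1]]
    else [[2,0,6,5,3,4,1], [1,5,4,6,3,0,2], [1,4,0,5,2,6,3], [6,1,5,0,3,2,4], [1,0,4,2,3,5,6], [3,1,0,6,2,5,4]])"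

definition design8 :: "nat \<Rightarrow> nat list list" where
  "design8 i = (if i = 1 then [[4,3,5,1,2,6,0], [2,7,3,6,4,5,0], [3,1,7,5,2,4,6], [6,5,3,7,4,1,0], [7,4,0,3,2,1,6], [0,2,5,7,1,4,3], [5,0,7,6,2,3,1], [1,6,5,4,2,7,0]]
    else if i = 2 then [[4,3,5,1,2,6,0], [5,7,4,2,0,6,3], [1,0,5,6,4,3,7], [7,5,4,6,1,3,2], [5,6,7,2,1,4,0], [7,6,1,5,2,3,0], [4,7,1,0,3,6,2], [1,3,7,0,2,5,4]]
    else if i = 3 then [[4,3,5,1,2,6,0], [3,2,0,5,7,4,1], [0,3,2,5,1,6,7], [7,2,5,0,3,6,4], [6,4,2,0,1,7,5], [3,5,4,1,0,7,6], [1,7,3,4,0,6,2], [5,6,1,3,7,2,4]]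
    else if i = 4 then [[4,3,5,1,2,6,0], [2,6,7,4,5,3,0], [6,7,1,4,2,5,0], [2,7,3,1,4,6,5], [1,0,5,7,4,3,6], [2,3,7,0,1,6,4], [3,2,0,7,1,5,6], [5,4,0,3,1,2,7]]
    else if i = 5 then [[4,3,5,1,2,6,0], [2,7,4,5,0,1,6], [1,6,5,4,2,3,7], [0,3,4,2,5,1,7], [7,0,1,4,6,3,2], [4,1,3,0,5,7,6], [2,0,4,7,3,6,5], [5,3,1,2,0,6,7]]
    else if i = 6 then [[4,3,5,1,2,6,0], [6,4,7,2,1,0,5], [3,7,1,5,4,2,0], [5,6,3,7,0,4,2], [6,2,5,7,1,3,0], [3,1,6,4,7,0,2], [0,5,7,6,3,4,1], [7,6,1,4,5,3,2]]
    else [[0,3,4,5,6,1,7], [6,2,7,0,5,1,4], [6,0,1,2,4,7,3], [2,4,5,3,1,7,6], [2,0,3,5,7,6,1], [0,1,4,6,3,2,5], [0,6,5,7,2,3,4], [3,1,5,2,0,4,7]])"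

definition holey_design15 :: "nat \<Rightarrow> nat list list" where
  "holey_design15 i = (if i = 1 then [[10,3,6,7,5,11,1], [11,2,9,6,13,1,4], [14,5,4,1,13,2,0], [5,4,3,13,0,1,8], [6,14,4,2,8,3,5], [7,2,4,0,5,13,3], [2,7,4,8,0,10,3], [2,12,3,1,6,11,5], [2,14,3,11,6,9,0], [14,2,1,11,3,9,4], [4,12,5,7,0,6,10], [13,4,6,14,5,10,0], [4,6,2,12,1,7,3], [12,6,0,7,1,2,3], [6,13,4,9,1,3,8], [0,11,4,12,6,8,1], [3,0,8,2,6,5,9], [3,6,1,12,0,9,5], [12,0,4,10,2,13,5], [6,10,1,5,8,4,7], [14,3,0,11,2,5,1], [0,14,1,9,2,10,5]]
    else if i = 2 then [[5,3,0,14,6,12,2], [1,7,0,13,4,5,14], [6,8,2,10,1,14,0], [3,7,6,1,0,5,11], [0,8,5,6,4,14,2], [10,4,14,5,0,2,1], [5,9,6,10,3,1,7], [14,6,1,5,9,2,3], [2,3,12,6,13,1,4], [0,11,3,12,1,9,4], [11,2,1,8,4,7,6], [4,10,5,1,13,6,2], [2,13,3,9,0,8,5], [3,9,4,1,11,2,13], [6,4,5,7,2,14,3], [5,13,4,8,2,9,6], [0,12,1,3,10,5,13], [1,9,0,12,4,3,8], [0,6,2,12,5,3,7], [1,0,10,2,7,4,11], [4,11,0,10,6,8,3], [12,5,11,6,3,0,4]]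
    else if i = 3 then [[6,2,9,5,8,1,3], [4,5,0,7,3,9,1], [3,11,2,12,6,13,5], [2,9,6,4,3,1,7], [3,13,0,9,5,1,8], [6,7,4,2,11,1,10], [8,3,4,11,5,6,2], [9,4,13,2,14,0,1], [1,2,3,6,7,5,10], [2,5,12,6,11,0,8], [0,3,2,14,1,13,6], [11,1,2,4,0,10,5], [12,0,7,5,14,6,1], [5,1,0,10,3,11,6], [7,3,13,0,6,8,4], [12,4,5,8,0,14,3], [3,0,4,13,1,6,9], [1,12,5,2,0,9,4], [14,4,11,0,2,7,1], [2,10,4,12,0,5,13], [4,6,10,2,12,3,14], [5,3,10,4,8,6,14]]
    else if i = 4 then [[4,11,3,9,5,1,7], [12,1,14,2,5,7,3], [8,0,13,6,1,9,4], [12,2,3,1,11,6,0], [2,0,4,3,6,8,1], [6,7,1,8,5,10,0], [5,14,0,3,13,2,8], [0,3,8,6,4,2,9], [14,6,9,5,11,2,4], [14,5,12,4,6,7,2], [0,1,13,4,10,5,11], [2,3,6,1,12,0,10], [4,8,3,5,13,0,14], [11,2,0,7,4,9,3], [13,4,0,1,9,2,5], [5,12,2,6,14,3,7], [11,6,2,13,3,14,1], [0,8,2,1,10,6,5], [12,4,10,3,1,5,6], [5,4,1,10,2,7,0], [4,5,3,10,6,13,1], [11,0,9,6,12,3,4]]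
    else if i = 5 then [[4,14,1,10,3,9,6], [4,1,5,7,0,13,2], [7,4,8,3,2,1,6], [6,12,4,3,10,0,2], [6,5,0,14,1,13,4], [11,1,3,4,5,13,6], [0,3,9,4,14,2,5], [7,1,9,5,10,2,3], [13,2,9,1,5,12,3], [5,3,1,0,11,2,8], [1,4,11,5,14,3,6], [14,2,5,13,3,12,0], [3,5,10,6,12,2,11], [8,0,9,6,2,12,5], [2,7,5,11,1,12,4], [0,11,3,7,4,13,1], [10,2,1,8,6,13,0], [6,7,2,8,0,3,14], [3,6,0,2,9,4,8], [10,4,5,6,0,7,1], [8,1,12,0,4,11,6], [5,14,6,10,4,0,9]]
    else if i = 6 then [[9,6,14,1,2,11,4], [12,3,9,5,11,2,0], [0,6,9,2,4,1,12], [11,4,12,2,10,6,3], [8,1,2,13,3,11,6], [0,9,3,5,1,4,14], [9,1,13,4,5,14,2], [1,9,0,6,4,3,10], [5,12,2,7,0,4,13], [4,7,0,3,14,1,10], [0,1,7,2,14,5,13], [0,5,6,1,7,4,8], [5,2,6,12,1,0,10], [7,3,10,6,11,1,5], [1,3,7,6,14,0,11], [3,4,0,2,8,5,12], [6,4,5,3,0,10,2], [10,4,14,3,6,8,5], [2,13,6,7,5,0,8], [4,8,3,13,6,5,9], [2,5,11,0,13,1,3], [6,12,4,2,3,8,1]]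
    else [[1,11,5,3,9,2,12], [4,9,6,1,14,5,7], [14,3,10,5,6,0,4], [3,12,0,11,6,1,7], [14,2,9,4,10,5,0], [12,6,9,5,1,0,2], [3,8,0,14,6,7,2], [0,10,4,2,1,5,9], [10,2,5,12,6,11,0], [2,14,4,0,8,6,13], [7,5,14,6,2,8,3], [8,5,2,3,12,4,6], [2,7,6,4,11,3,10], [6,10,1,4,2,13,0], [12,0,7,1,9,3,5], [4,8,2,0,9,1,13], [5,8,1,0,3,13,6], [11,1,12,4,13,0,3], [5,13,3,14,1,8,4], [13,1,3,4,7,0,5], [11,2,6,3,1,4,5], [2,1,10,6,3,4,11]])"

lemma is_list_design_design7: "i \<in> {1..7} \<Longrightarrow> is_list_design i 7 7 (design7 i)"
  by (drule in_1_to_7_cases) (elim disjE; simp add: is_list_design_def design7_def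
      block_arc_list_def D_pattern_def mem_arcs_off_hole)

lemma is_list_design_design8: "i \<in> {1..7} \<Longrightarrow> is_list_design i 8 8 (design8 i)"
  by (drule in_1_to_7_cases) (elim disjE; simp add: is_list_design_def design8_def
      block_arc_list_def D_pattern_def mem_arcs_off_hole)

lemma is_list_design_holey_design15: "i \<in> {1..7} \<Longrightarrow> is_list_design i 15 7 (holey_design15 i)"
  by (drule in_1_to_7_cases) (elim disjE; simp add: is_list_design_def holey_design15_def
      block_arc_list_def D_pattern_def mem_arcs_off_hole)

theorem corollary1p6:
  fixes v :: nat and i :: nat
  assumes "v \<ge> 7"
    and "v mod 14 = 1 \<or> v mod 14 = 7"
    and "i \<in> {1..7}"
  shows "has_D_decomposition i {0..<v}"
proof -
  define q where "q = v div 14"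
  have v: "v = 14 * q + v mod 14" by (simp add: q_def)
  from assms(2) show ?thesis
  proof
    assume r: "v mod 14 = 1"
    with assms(1) v have "1 \<le> q" by (cases q) auto
    have "has_D_decomposition i {0..<7 * (2 * q - 1) + 8}"
      using \<open>1 \<le> q\<close> is_list_design_holey_design15[OF assms(3)] is_list_design_design8[OF assms(3)]
      by (intro has_D_decomposition_7m_plus_hole[OF _ assms(3), where T = "holey_design15 i"]) simp_all
    with r v \<open>1 \<le> q\<close> show ?thesis by (simp add: algebra_simps)
  next
    assume r: "v mod 14 = 7"
    have "has_D_decomposition i {0..<7 * (2 * q + 1) + 0}"
      using is_list_design_design7[OF assms(3)]
      by (intro has_D_decomposition_7m_plus_hole[OF _ assms(3), where T = "design7 i" and S = "[]"])
        (simp_all add: is_list_design_def arcs_off_hole_def)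
    with r v show ?thesis by (simp add: algebra_simps)
  qed
qed

end
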